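(* Let $n>2$, $1\le k<n$, and let the triple $(\kappa,M,p)$ satisfy Assumption (A) (see context). Then there is a multivariate polynomial $g_{\kappa,M,p}:\mathbb{R}^n\times\mathbb{R}^{n\times k}\to\mathbb{R}$, which does not depend on the hypothesis $(R,r)$, such that for every $X\in\mathfrak{X}_0$ $$N(\hat\Omega_{\kappa,M,p,X})=\{y\in\mathbb{R}^n: g_{\kappa,M,p}(y,X)=0\}.$$ In particular $N(\hat\Omega_{\kappa,M,p,X})$ is an algebraic subset of $\mathbb{R}^n$.
   Context: Let $n>2$ and $1\le k<n$ be integers and $\mathfrak{X}_0=\{X\in\mathbb{R}^{n\times k}:\operatorname{rank}(X)=k\}$. For $X\in\mathfrak{X}_0$, $y\in\mathbb{R}^n$: $\hat\beta_X(y)=(X'X)^{-1}X'y$, $\hat u_X(y)=y-X\hat\beta_X(y)$. A hypothesis is $(R,r)$ with $R\in\mathbb{R}^{q\times k}$, $\operatorname{rank}(R)=q\ge1$, $r\in\mathbb{R}^q$. Construction of the prewhitened estimator $\hat\Omega_{\kappa,M,p,X}$ at $y$ (given kernel $\kappa:\mathbb{R}\to\mathbb{R}$, bandwidth $M$, integer order $p$): let $\hat V(y)=X'\operatorname{diag}(\hat u_X(y))\in\mathbb{R}^{k\times n}$ with columns $\hat V_{\cdot j}(y)$; $\hat V_p(y)=(\hat V_{\cdot(p+1)}(y),\dots,\hat V_{\cdot n}(y))\in\mathbb{R}^{k\times(n-p)}$; $\hat V_1(y)\in\mathbb{R}^{kp\times(n-p)}$ has $j$-th column $(\hat V_{\cdot(j+p-1)}(y)',\dots,\hat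 V_{\cdot(j+1)}(y)',\hat V_{\cdot j}(y)')'$. If $\hat V_1\hat V_1'$ is invertible, $\hat A^{(p)}(y)=(\hat A_1(y),\dots,\hat A_p(y))=\hat V_p(y)\hat V_1(y)'(\hat V_1(y)\hat V_1(y)')^{-1}$ ($\hat A_l\in\mathbb{R}^{k\times k}$) and $\hat Z(y)=\hat V_p(y)-\hat A^{(p)}(y)\hat V_1(y)\in\mathbb{R}^{k\times(n-p)}$. Put $\check\Gamma_i(y)=(n-p)^{-1}\sum_{j=i+1}^{n-p}\hat Z_{\cdot j}(y)\hat Z_{\cdot(j-i)}(y)'$ for $0\le i\le n-p-1$, $\check\Gamma_{-i}=\check\Gamma_i'$, and $\check\Psi(y)=\sum_{i=-(n-p-1)}^{n-p-1}\kappa(i/M(y))\check\Gamma_i(y)$, where if $M(y)=0$ the weight $\kappa(i/M(y))$ is read as $1$ for $i=0$ and $0$ for $i\neq0$. If $I_k-\sum_{l=1}^p\hat A_l(y)$ is invertible, with $F=(I_k-\sum_l\hat A_l(y))^{-1}$ set $\hat\Psi(y)=F\check\Psi(y)F'$ and $\hat\Omega_{\kappa,M,p,X}(y)=nR(X'X)^{-1}\hat\Psi(y)(X'X)^{-1}R'$. The estimator is undefined at $y$ if $\hat V_1(y)\hat V_1(y)'$ is singular, or $I_k-\sum_l\hat A_l(y)$ is singular, or $M(y)$ is undefined. $N(\hat\Omega_{\kappa,M,p,X})$ is the set of $y$ where it is undefined. Bandwidths (computed from $\hat Z(y)$; undefined whenever $\hat Z(y)$ is undefined or a denominator below vanishes;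 all tuning constants are functionally independent of $y$ and $X$). A weights vector is $\omega\in\mathbb{R}^k\setminus\{0\}$ with nonnegative entries. $\mathbb{M}_{AM}$: with $\hat\rho_i=\sum_{j=2}^{n-p}\hat Z_{ij}\hat Z_{i(j-1)}/\sum_{j=1}^{n-p-1}\hat Z_{ij}^2$, $\hat\sigma_i^2=(n-p-1)^{-1}\sum_{j=2}^{n-p}(\hat Z_{ij}-\hat\rho_i\hat Z_{i(j-1)})^2$ ($i=1,\dots,k$), $\hat\alpha_1=\sum_i\omega_i\frac{4\hat\rho_i^2\hat\sigma_i^4}{(1-\hat\rho_i)^6(1+\hat\rho_i)^2}\big/\sum_i\omega_i\frac{\hat\sigma_i^4}{(1-\hat\rho_i)^4}$, $\hat\alpha_2=\sum_i\omega_i\frac{4\hat\rho_i^2\hat\sigma_i^4}{(1-\hat\rho_i)^8}\big/\sum_i\omega_i\frac{\hat\sigma_i^4}{(1-\hat\rho_i)^4}$, $M(y)=c_1(\hat\alpha_j(y)n)^{c_2}$ for fixed $c_1,c_2>0$, $j\in\{1,2\}$, weights vector $\omega$. $\mathbb{M}_{NW}$: with a weights vector $\omega$, numbers $w(i)\ge0$ ($|i|\le n-p-1$), $w(0)=1$, $\bar\sigma_i(y)=\omega'\check\Gamma_{|i|}(y)\omega$, $M(y)=\bar c_2\big(\big[\sum_{i}|i|^{\bar c_1}w(i)\bar\sigma_i(y)/\sum_i w(i)\bar\sigma_i(y)\big]^2n\big)^{\bar c_3}$ (sums over $|i|\le n-p-1$), $\bar c_1$ a positive integer, $\bar c_2,\bar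 c_3>0$. $\mathbb{M}_{KV}$: constant bandwidths $M>0$. Assumption (A) on $(\kappa,M,p)$: (i) $\kappa$ is even, continuous, $\kappa(0)=1$, $\kappa(x)\to0$ as $x\to\infty$, and for every real $s>0$ and positive integer $J$ the $J\times J$ matrix $(\kappa((i-j)/s))_{i,j}$ is positive definite; (ii) $M\in\mathbb{M}_{AM}\cup\mathbb{M}_{NW}\cup\mathbb{M}_{KV}$; (iii) $p$ is an integer with $1\le p\le n/(k+1)$. *)

theory Defs
  imports Complex_Main "Jordan_Normal_Form.Gauss_Jordan_Elimination" "Jordan_Normal_Form.DL_Rank"
begin

(* Conventions: matrices are JNF matrices (real mat) with explicit dimensions,
   vectors are real vec. All indices are 0-based; index j (0-based) corresponds
   to index j+1 of the paper. *)

inductive mvpoly :: "nat \<Rightarrow> nat \<Rightarrow> (real vec \<Rightarrow> real mat \<Rightarrow> real) \<Rightarrow> bool"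
  for n k :: nat where
  const: "mvpoly n k (\<lambda>y X. c)"
| yvar: "i < n \<Longrightarrow> mvpoly n k (\<lambda>y X. y $ i)"
| xvar: "i < n \<Longrightarrow> j < k \<Longrightarrow> mvpoly n k (\<lambda>y X. X $$ (i, j))"
| add: "mvpoly n k f \<Longrightarrow> mvpoly n k g \<Longrightarrow> mvpoly n k (\<lambda>y X. f y X + g y X)"
| mult: "mvpoly n k f \<Longrightarrow> mvpoly n k g \<Longrightarrow> mvpoly n k (\<lambda>y X. f y X * g y X)"

definition design_set :: "nat \<Rightarrow> nat \<Rightarrow> real mat set" where
  "design_set n k = {X. X \<in> carrier_mat n k \<and> vec_space.rank n X = k}"

definition beta_hat :: "real mat \<Rightarrow> real vec \<Rightarrow> real vec" where
  "beta_hat X y = the (mat_inverse (transpose_mat X * X)) *\<^sub>v (transpose_mat X *\<^sub>v y)"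

definition u_hat :: "real mat \<Rightarrow> real vec \<Rightarrow> real vec" where
  "u_hat X y = y - X *\<^sub>v beta_hat X y"

definition V_hat :: "real mat \<Rightarrow> real vec \<Rightarrow> real mat" where
  "V_hat X y = transpose_mat X * mat_diag (dim_row X) (\<lambda>i. u_hat X y $ i)"

definition V_p :: "nat \<Rightarrow> real mat \<Rightarrow> real mat" where
  "V_p p V = mat (dim_row V) (dim_col V - p) (\<lambda>(i, j). V $$ (i, j + p))"

(* V_1: kp x (n-p); (0-based) column j is (V_{j+p-1}', ..., V_{j}')' (0-based columns of V),
   i.e. row block l (0-based) holds column j+p-1-l of V *)
definition V_1 :: "nat \<Rightarrow> real mat \<Rightarrow> real mat" where
  "V_1 p V = mat (dim_row V * p) (dim_col V - p)
     (\<lambda>(r, j). V $$ (r mod (dim_row V), j + p - 1 - r div (dim_row V)))"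

definition A_hat :: "nat \<Rightarrow> real mat \<Rightarrow> real mat option" where
  "A_hat p V = (case mat_inverse (V_1 p V * transpose_mat (V_1 p V)) of
       None \<Rightarrow> None
     | Some B \<Rightarrow> Some (V_p p V * transpose_mat (V_1 p V) * B))"

definition A_sum :: "nat \<Rightarrow> nat \<Rightarrow> real mat \<Rightarrow> real mat" where
  "A_sum k p A = mat k k (\<lambda>(i, j). \<Sum>l<p. A $$ (i, l * k + j))"

definition Z_hat :: "nat \<Rightarrow> real mat \<Rightarrow> real mat option" where
  "Z_hat p V = (case A_hat p V of None \<Rightarrow> None
                 | Some A \<Rightarrow> Some (V_p p V - A * V_1 p V))"

definition Gam :: "real mat \<Rightarrow> nat \<Rightarrow> real mat" where
  "Gam Z i = mat (dim_row Z) (dim_row Z)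
     (\<lambda>(a, b). (\<Sum>j\<in>{i..<dim_col Z}. Z $$ (a, j) * Z $$ (b, j - i)) / real (dim_col Z))"

definition Gam_int :: "real mat \<Rightarrow> int \<Rightarrow> real mat" where
  "Gam_int Z i = (if i \<ge> 0 then Gam Z (nat i) else transpose_mat (Gam Z (nat (- i))))"

definition kweight :: "(real \<Rightarrow> real) \<Rightarrow> real \<Rightarrow> int \<Rightarrow> real" where
  "kweight \<kappa> M i = (if M = 0 then (if i = 0 then 1 else 0) else \<kappa> (real_of_int i / M))"

definition Psi_check :: "(real \<Rightarrow> real) \<Rightarrow> real \<Rightarrow> real mat \<Rightarrow> real mat" where
  "Psi_check \<kappa> M Z = mat (dim_row Z) (dim_row Z)
     (\<lambda>(a, b). \<Sum>i\<in>{- (int (dim_col Z) - 1) .. int (dim_col Z) - 1}.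
                  kweight \<kappa> M i * Gam_int Z i $$ (a, b))"

(* AM c1 c2 j omega : Andrews-type (M_AM);
   NW omega w cbar1 cbar2 cbar3 : Newey-West-type (M_NW);
   KV M : constant bandwidth (M_KV) *)
datatype bandwidth =
    AM real real nat "real vec"
  | NW "real vec" "int \<Rightarrow> real" nat real real
  | KV real

definition weights_vector :: "nat \<Rightarrow> real vec \<Rightarrow> bool" where
  "weights_vector k \<omega> \<longleftrightarrow> \<omega> \<in> carrier_vec k \<and> \<omega> \<noteq> 0\<^sub>v k \<and> (\<forall>i<k. \<omega> $ i \<ge> 0)"

definition bandwidth_ok :: "nat \<Rightarrow> nat \<Rightarrow> nat \<Rightarrow> bandwidth \<Rightarrow> bool" where
  "bandwidth_ok n k p b = (case b of
      AM c1 c2 j \<omega> \<Rightarrow> c1 > 0 \<and> c2 > 0 \<and> j \<in> {1, 2} \<and> weights_vector k \<omega>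
    | NW \<omega> w c1 c2 c3 \<Rightarrow> weights_vector k \<omega> \<and> w 0 = 1
          \<and> (\<forall>i. \<bar>i\<bar> \<le> int n - int p - 1 \<longrightarrow> w i \<ge> 0)
          \<and> c1 \<ge> 1 \<and> c2 > 0 \<and> c3 > 0
    | KV M \<Rightarrow> M > 0)"

definition rho_hat :: "real mat \<Rightarrow> nat \<Rightarrow> real" where
  "rho_hat Z i = (\<Sum>j\<in>{1..<dim_col Z}. Z $$ (i, j) * Z $$ (i, j - 1))
                 / (\<Sum>j<dim_col Z - 1. (Z $$ (i, j))\<^sup>2)"

definition sigma2_hat :: "real mat \<Rightarrow> nat \<Rightarrow> real" where
  "sigma2_hat Z i = (\<Sum>j\<in>{1..<dim_col Z}. (Z $$ (i, j) - rho_hat Z i * Z $$ (i, j - 1))\<^sup>2)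
                    / real (dim_col Z - 1)"

definition bandwidth_val :: "bandwidth \<Rightarrow> nat \<Rightarrow> real mat \<Rightarrow> real option" where
  "bandwidth_val b n Z = (case b of
      AM c1 c2 j \<omega> \<Rightarrow>
        (let k = dim_row Z; \<rho> = rho_hat Z; \<sigma>2 = sigma2_hat Z;
             den = (\<Sum>i<k. \<omega> $ i * (\<sigma>2 i)\<^sup>2 / (1 - \<rho> i) ^ 4);
             num1 = (\<Sum>i<k. \<omega> $ i * (4 * (\<rho> i)\<^sup>2 * (\<sigma>2 i)\<^sup>2)
                                / ((1 - \<rho> i) ^ 6 * (1 + \<rho> i)\<^sup>2));
             num2 = (\<Sum>i<k. \<omega> $ i * (4 * (\<rho> i)\<^sup>2 * (\<sigma>2 i)\<^sup>2) / (1 - \<rho> i) ^ 8);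
             \<alpha> = (if j = 1 then num1 / den else num2 / den)
         in if (\<forall>i<k. (\<Sum>l<dim_col Z - 1. (Z $$ (i, l))\<^sup>2) \<noteq> 0 \<and> \<rho> i \<noteq> 1
                       \<and> (j = 1 \<longrightarrow> \<rho> i \<noteq> -1)) \<and> den \<noteq> 0
            then Some (c1 * (\<alpha> * real n) powr c2) else None)
    | NW \<omega> w c1 c2 c3 \<Rightarrow>
        (let m = int (dim_col Z);
             \<sigma>b = (\<lambda>i::int. \<omega> \<bullet> (Gam Z (nat \<bar>i\<bar>) *\<^sub>v \<omega>));
             den = (\<Sum>i\<in>{-(m - 1)..m - 1}. w i * \<sigma>b i);
             num = (\<Sum>i\<in>{-(m - 1)..m - 1}. real (nat \<bar>i\<bar>) ^ c1 * w i * \<sigma>b i)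
         in if den \<noteq> 0 then Some (c2 * ((num / den)\<^sup>2 * real n) powr c3) else None)
    | KV M \<Rightarrow> Some M)"

definition Omega_hat :: "(real \<Rightarrow> real) \<Rightarrow> bandwidth \<Rightarrow> nat \<Rightarrow> real mat \<Rightarrow> real mat
                          \<Rightarrow> real vec \<Rightarrow> real mat option" where
  "Omega_hat \<kappa> b p X R y =
    (let n = dim_row X; k = dim_col X; V = V_hat X y;
         XXi = the (mat_inverse (transpose_mat X * X)) in
     case A_hat p V of None \<Rightarrow> None
     | Some A \<Rightarrow>
       (let Z = V_p p V - A * V_1 p V in
        case mat_inverse (1\<^sub>m k - A_sum k p A) of None \<Rightarrow> None
        | Some F \<Rightarrow>
          (case bandwidth_val b n Z of None \<Rightarrow> None
           | Some M \<Rightarrow>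
              (let Psi = F * Psi_check \<kappa> M Z * transpose_mat F in
               Some (real n \<cdot>\<^sub>m (R * XXi * Psi * XXi * transpose_mat R))))))"

definition N_set :: "(real \<Rightarrow> real) \<Rightarrow> bandwidth \<Rightarrow> nat \<Rightarrow> real mat \<Rightarrow> real mat \<Rightarrow> real vec set" where
  "N_set \<kappa> b p X R = {y \<in> carrier_vec (dim_row X). Omega_hat \<kappa> b p X R y = None}"

definition pos_def_mat :: "real mat \<Rightarrow> bool" where
  "pos_def_mat A \<longleftrightarrow> (\<exists>J. A \<in> carrier_mat J J \<and>
      (\<forall>x \<in> carrier_vec J. x \<noteq> 0\<^sub>v J \<longrightarrow> x \<bullet> (A *\<^sub>v x) > 0))"

definition kernel_ok :: "(real \<Rightarrow> real) \<Rightarrow> bool" where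
  "kernel_ok \<kappa> \<longleftrightarrow> (\<forall>x. \<kappa> (- x) = \<kappa> x) \<and> continuous_on UNIV \<kappa> \<and> \<kappa> 0 = 1
     \<and> (\<kappa> \<longlongrightarrow> 0) at_top
     \<and> (\<forall>s::real. \<forall>J::nat. s > 0 \<and> J \<ge> 1 \<longrightarrow>
          pos_def_mat (mat J J (\<lambda>(i, j). \<kappa> ((real i - real j) / s))))"

definition assumption_A :: "nat \<Rightarrow> nat \<Rightarrow> (real \<Rightarrow> real) \<Rightarrow> bandwidth \<Rightarrow> nat \<Rightarrow> bool" where
  "assumption_A n k \<kappa> b p \<longleftrightarrow> kernel_ok \<kappa> \<and> bandwidth_ok n k p b
     \<and> 1 \<le> p \<and> real p \<le> real n / real (k + 1)"

end

theory Submission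
  imports Defs
begin

text \<open>Every step of the estimator is rational in \<open>(y, X)\<close>, and every denominator is a determinant,
  so replacing inverses by adjugates shows that each way of being undefined is the vanishing of a
  polynomial. With \<open>c = det (X'X) \<noteq> 0\<close>, \<open>V_hat = V_adj / c\<close> for a polynomial matrix \<open>V_adj\<close>. The
  least-squares coefficients \<open>A_hat\<close> are invariant under scaling of \<open>V\<close>; they exist iff
  \<open>d = det (V_1 V_1') \<noteq> 0\<close>, and then \<open>A_hat = A_adj / d\<close>. Hence \<open>I - \<Sum> A_l\<close> is singular iff
  \<open>det (d I - \<Sum> A_adj,l) = 0\<close>, and the prewhitened residuals are the multiple \<open>Z_adj / (c d)\<close> of a
  polynomial matrix. Finally each bandwidth rule is undefined exactly when a polynomial in the
  entries of the residual matrix vanishes, a condition that is invariant under nonzero scaling.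
  The product of the three polynomials is the required \<open>g\<close>.\<close>

section \<open>Polynomial functions of the data\<close>

lemma mvpoly_cong:
  assumes "mvpoly n k g" and "\<And>y X. f y X = g y X"
  shows "mvpoly n k f"
proof -
  have "f = g" by (intro ext) (rule assms(2))
  with assms(1) show ?thesis by simp
qed

lemma mvpoly_neg: "mvpoly n k f \<Longrightarrow> mvpoly n k (\<lambda>y X. - f y X)"
  by (rule mvpoly_cong[OF mvpoly.mult[OF mvpoly.const[of n k "-1"]]]) auto

lemma mvpoly_diff:
  assumes "mvpoly n k f" and "mvpoly n k g"
  shows "mvpoly n k (\<lambda>y X. f y X - g y X)"
  by (rule mvpoly_cong[OF mvpoly.add[OF assms(1) mvpoly_neg[OF assms(2)]]]) simp

lemma mvpoly_divide_const: "mvpoly n k f \<Longrightarrow> mvpoly n k (\<lambda>y X. f y X / c)"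
  by (erule mvpoly_cong[OF mvpoly.mult[OF _ mvpoly.const[of n k "1 / c"]]]) simp

lemma mvpoly_power: "mvpoly n k f \<Longrightarrow> mvpoly n k (\<lambda>y X. f y X ^ e)"
proof (induction e)
  case (Suc e)
  then show ?case using mvpoly.mult[of n k f "\<lambda>y X. f y X ^ e"] by simp
qed (simp add: mvpoly.const)

lemma mvpoly_if: "mvpoly n k f \<Longrightarrow> mvpoly n k g \<Longrightarrow> mvpoly n k (\<lambda>y X. if P then f y X else g y X)"
  by (cases P) auto

lemma mvpoly_sum:
  "(\<And>i. i \<in> A \<Longrightarrow> mvpoly n k (f i)) \<Longrightarrow> mvpoly n k (\<lambda>y X. \<Sum>i\<in>A. f i y X)"
proof (induction A rule: infinite_finite_induct)
  case (insert x F)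
  then show ?case using mvpoly.add[of n k "f x" "\<lambda>y X. \<Sum>i\<in>F. f i y X"] by simp
qed (simp_all add: mvpoly.const)

lemma mvpoly_prod:
  "(\<And>i. i \<in> A \<Longrightarrow> mvpoly n k (f i)) \<Longrightarrow> mvpoly n k (\<lambda>y X. \<Prod>i\<in>A. f i y X)"
proof (induction A rule: infinite_finite_induct)
  case (insert x F)
  then show ?case using mvpoly.mult[of n k "f x" "\<lambda>y X. \<Prod>i\<in>F. f i y X"] by simp
qed (simp_all add: mvpoly.const)

definition poly_mat :: "nat \<Rightarrow> nat \<Rightarrow> nat \<Rightarrow> nat \<Rightarrow> (real vec \<Rightarrow> real mat \<Rightarrow> real mat) \<Rightarrow> bool" where
  "poly_mat n k r s F \<longleftrightarrow> (\<forall>y X. F y X \<in> carrier_mat r s) \<and>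
     (\<forall>i<r. \<forall>j<s. mvpoly n k (\<lambda>y X. F y X $$ (i, j)))"

lemma poly_matI:
  "(\<And>y X. F y X \<in> carrier_mat r s) \<Longrightarrow>
   (\<And>i j. i < r \<Longrightarrow> j < s \<Longrightarrow> mvpoly n k (\<lambda>y X. F y X $$ (i, j))) \<Longrightarrow> poly_mat n k r s F"
  unfolding poly_mat_def by blast

lemma poly_mat_carrier: "poly_mat n k r s F \<Longrightarrow> F y X \<in> carrier_mat r s"
  unfolding poly_mat_def by blast

lemma poly_mat_dim:
  "poly_mat n k r s F \<Longrightarrow> dim_row (F y X) = r"
  "poly_mat n k r s F \<Longrightarrow> dim_col (F y X) = s"
  using poly_mat_carrier by blast+

lemma poly_mat_entry: "poly_mat n k r s F \<Longrightarrow> i < r \<Longrightarrow> j < s \<Longrightarrow> mvpoly n k (\<lambda>y X. F y X $$ (i, j))"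
  unfolding poly_mat_def by blast

lemma poly_mat_of_entries:
  assumes "\<And>i j. i < r \<Longrightarrow> j < s \<Longrightarrow> mvpoly n k (f i j)"
  shows "poly_mat n k r s (\<lambda>y X. mat r s (\<lambda>(i, j). f i j y X))"
proof (rule poly_matI)
  show "mvpoly n k (\<lambda>y X. mat r s (\<lambda>(i, j). f i j y X) $$ (i, j))" if "i < r" "j < s" for i j
    using that by (intro mvpoly_cong[OF assms]) simp_all
qed simp

lemma poly_mat_cong:
  assumes "poly_mat n k r s G" and "\<And>y X. F y X = G y X"
  shows "poly_mat n k r s F"
proof -
  have "F = G" by (intro ext) (rule assms(2))
  with assms(1) show ?thesis by simp
qed

lemma poly_mat_diff:
  assumes F: "poly_mat n k r s F" and G: "poly_mat n k r s G"
  shows "poly_mat n k r s (\<lambda>y X. F y X - G y X)"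
proof (rule poly_matI)
  show "F y X - G y X \<in> carrier_mat r s" for y X
    using poly_mat_carrier[OF F, of y X] poly_mat_carrier[OF G, of y X] by (simp add: minus_carrier_mat)
  show "mvpoly n k (\<lambda>y X. (F y X - G y X) $$ (i, j))" if ij: "i < r" "j < s" for i j
    by (rule mvpoly_cong[OF mvpoly_diff[OF poly_mat_entry[OF F ij] poly_mat_entry[OF G ij]]])
      (simp add: poly_mat_dim[OF F] poly_mat_dim[OF G] ij)
qed

lemma poly_mat_smult:
  assumes f: "mvpoly n k f" and F: "poly_mat n k r s F"
  shows "poly_mat n k r s (\<lambda>y X. f y X \<cdot>\<^sub>m F y X)"
proof (rule poly_matI)
  show "f y X \<cdot>\<^sub>m F y X \<in> carrier_mat r s" for y X
    using poly_mat_carrier[OF F, of y X] by simp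
  show "mvpoly n k (\<lambda>y X. (f y X \<cdot>\<^sub>m F y X) $$ (i, j))" if ij: "i < r" "j < s" for i j
    by (rule mvpoly_cong[OF mvpoly.mult[OF f poly_mat_entry[OF F ij]]]) (simp add: poly_mat_dim[OF F] ij)
qed

lemma poly_mat_transpose:
  assumes F: "poly_mat n k r s F"
  shows "poly_mat n k s r (\<lambda>y X. transpose_mat (F y X))"
proof (rule poly_matI)
  show "transpose_mat (F y X) \<in> carrier_mat s r" for y X
    using poly_mat_carrier[OF F, of y X] by simp
  show "mvpoly n k (\<lambda>y X. transpose_mat (F y X) $$ (i, j))" if ij: "i < s" "j < r" for i j
    by (rule mvpoly_cong[OF poly_mat_entry[OF F, of j i]]) (use ij in \<open>simp_all add: poly_mat_dim[OF F]\<close>)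
qed

lemma poly_mat_mult:
  assumes F: "poly_mat n k r s F" and G: "poly_mat n k s t G"
  shows "poly_mat n k r t (\<lambda>y X. F y X * G y X)"
proof (rule poly_matI)
  show "F y X * G y X \<in> carrier_mat r t" for y X
    using poly_mat_carrier[OF F, of y X] poly_mat_carrier[OF G, of y X] by (simp add: minus_carrier_mat)
  show "mvpoly n k (\<lambda>y X. (F y X * G y X) $$ (i, j))" if ij: "i < r" "j < t" for i j
  proof (rule mvpoly_cong)
    show "mvpoly n k (\<lambda>y X. \<Sum>l<s. F y X $$ (i, l) * G y X $$ (l, j))"
      using ij by (intro mvpoly_sum mvpoly.mult poly_mat_entry[OF F] poly_mat_entry[OF G]) auto
    show "(F y X * G y X) $$ (i, j) = (\<Sum>l<s. F y X $$ (i, l) * G y X $$ (l, j))" for y X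
      using ij by (simp add: poly_mat_dim[OF F] poly_mat_dim[OF G] scalar_prod_def atLeast0LessThan)
  qed
qed

lemma poly_mat_one: "poly_mat n k m m (\<lambda>y X. 1\<^sub>m m)"
  by (intro poly_matI) (auto intro: mvpoly_cong[OF mvpoly.const])

lemma mvpoly_det:
  assumes F: "poly_mat n k m m F"
  shows "mvpoly n k (\<lambda>y X. det (F y X))"
proof (rule mvpoly_cong)
  show "mvpoly n k (\<lambda>y X. \<Sum>\<pi>\<in>{\<pi>. \<pi> permutes {0..<m}}. signof \<pi> * (\<Prod>i=0..<m. F y X $$ (i, \<pi> i)))"
    by (intro mvpoly_sum mvpoly.mult mvpoly_prod mvpoly.const poly_mat_entry[OF F])
      (auto simp: permutes_in_image)
  show "det (F y X) = (\<Sum>\<pi>\<in>{\<pi>. \<pi> permutes {0..<m}}. signof \<pi> * (\<Prod>i=0..<m. F y X $$ (i, \<pi> i)))" for y X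
    by (rule det_def'[OF poly_mat_carrier[OF F]])
qed

lemma poly_mat_adj:
  assumes F: "poly_mat n k m m F"
  shows "poly_mat n k m m (\<lambda>y X. adj_mat (F y X))"
proof (rule poly_mat_cong)
  have minor: "poly_mat n k (m - 1) (m - 1) (\<lambda>y X. mat_delete (F y X) j i)" if "i < m" "j < m" for i j
  proof (rule poly_mat_cong)
    show "poly_mat n k (m - 1) (m - 1) (\<lambda>y X. mat (m - 1) (m - 1) (\<lambda>(a, b).
        F y X $$ (if a < j then a else Suc a, if b < i then b else Suc b)))"
      by (rule poly_mat_of_entries, rule poly_mat_entry[OF F]) auto
    show "mat_delete (F y X) j i = mat (m - 1) (m - 1) (\<lambda>(a, b).
        F y X $$ (if a < j then a else Suc a, if b < i then b else Suc b))" for y X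
      unfolding mat_delete_def by (simp add: poly_mat_dim[OF F])
  qed
  show "poly_mat n k m m (\<lambda>y X. mat m m (\<lambda>(i, j). (-1) ^ (j + i) * det (mat_delete (F y X) j i)))"
    by (intro poly_mat_of_entries mvpoly.mult mvpoly.const mvpoly_det[OF minor])
  show "adj_mat (F y X) = mat m m (\<lambda>(i, j). (-1) ^ (j + i) * det (mat_delete (F y X) j i))" for y X
    unfolding adj_mat_def cofactor_def by (simp add: poly_mat_dim[OF F])
qed

lemma poly_mat_V_p:
  assumes F: "poly_mat n k r s F"
  shows "poly_mat n k r (s - p) (\<lambda>y X. V_p p (F y X))"
proof (rule poly_mat_cong)
  show "poly_mat n k r (s - p) (\<lambda>y X. mat r (s - p) (\<lambda>(i, j). F y X $$ (i, j + p)))"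
    by (rule poly_mat_of_entries, rule poly_mat_entry[OF F]) auto
  show "V_p p (F y X) = mat r (s - p) (\<lambda>(i, j). F y X $$ (i, j + p))" for y X
    unfolding V_p_def by (simp add: poly_mat_dim[OF F])
qed

lemma poly_mat_V_1:
  assumes F: "poly_mat n k r s F"
  shows "poly_mat n k (r * p) (s - p) (\<lambda>y X. V_1 p (F y X))"
proof (rule poly_mat_cong)
  show "poly_mat n k (r * p) (s - p)
      (\<lambda>y X. mat (r * p) (s - p) (\<lambda>(i, j). F y X $$ (i mod r, j + p - 1 - i div r)))"
  proof (rule poly_mat_of_entries, rule poly_mat_entry[OF F])
    fix i j assume "i < r * p" "j < s - p"
    then have "r > 0" by (cases r) auto
    then show "i mod r < r" by simp
    show "j + p - 1 - i div r < s" using \<open>j < s - p\<close> by linarith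
  qed
  show "V_1 p (F y X) = mat (r * p) (s - p) (\<lambda>(i, j). F y X $$ (i mod r, j + p - 1 - i div r))" for y X
    unfolding V_1_def by (simp add: poly_mat_dim[OF F])
qed

lemma block_index_less:
  fixes j k l p :: nat
  assumes "j < k" and "l < p"
  shows "l * k + j < k * p"
proof -
  have "l * k + j < Suc l * k" using assms(1) by simp
  also have "\<dots> \<le> p * k" using assms(2) by (intro mult_le_mono1) simp
  finally show ?thesis by (simp add: mult.commute)
qed

lemma poly_mat_A_sum:
  assumes F: "poly_mat n k r (r * p) F"
  shows "poly_mat n k r r (\<lambda>y X. A_sum r p (F y X))"
  unfolding A_sum_def
  by (intro poly_mat_of_entries mvpoly_sum poly_mat_entry[OF F]) (auto intro: block_index_less)

definition poly_vec :: "nat \<Rightarrow> nat \<Rightarrow> nat \<Rightarrow> (real vec \<Rightarrow> real mat \<Rightarrow> real vec) \<Rightarrow> bool" where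
  "poly_vec n k r v \<longleftrightarrow> (\<forall>y X. v y X \<in> carrier_vec r) \<and> (\<forall>i<r. mvpoly n k (\<lambda>y X. v y X $ i))"

lemma poly_vecI:
  "(\<And>y X. v y X \<in> carrier_vec r) \<Longrightarrow> (\<And>i. i < r \<Longrightarrow> mvpoly n k (\<lambda>y X. v y X $ i)) \<Longrightarrow>
   poly_vec n k r v"
  unfolding poly_vec_def by blast

lemma poly_vec_carrier: "poly_vec n k r v \<Longrightarrow> v y X \<in> carrier_vec r"
  unfolding poly_vec_def by blast

lemma poly_vec_dim: "poly_vec n k r v \<Longrightarrow> dim_vec (v y X) = r"
  by (rule carrier_vecD[OF poly_vec_carrier])

lemma poly_vec_entry: "poly_vec n k r v \<Longrightarrow> i < r \<Longrightarrow> mvpoly n k (\<lambda>y X. v y X $ i)"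
  unfolding poly_vec_def by blast

lemma poly_vec_of_entries:
  assumes "\<And>i. i < r \<Longrightarrow> mvpoly n k (f i)"
  shows "poly_vec n k r (\<lambda>y X. vec r (\<lambda>i. f i y X))"
proof (rule poly_vecI)
  show "mvpoly n k (\<lambda>y X. vec r (\<lambda>i. f i y X) $ i)" if "i < r" for i
    using that by (intro mvpoly_cong[OF assms]) simp_all
qed simp

lemma poly_vec_smult:
  assumes f: "mvpoly n k f" and v: "poly_vec n k r v"
  shows "poly_vec n k r (\<lambda>y X. f y X \<cdot>\<^sub>v v y X)"
proof (rule poly_vecI)
  show "f y X \<cdot>\<^sub>v v y X \<in> carrier_vec r" for y X
    using poly_vec_carrier[OF v, of y X] by simp
  show "mvpoly n k (\<lambda>y X. (f y X \<cdot>\<^sub>v v y X) $ i)" if i: "i < r" for i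
    by (rule mvpoly_cong[OF mvpoly.mult[OF f poly_vec_entry[OF v i]]]) (simp add: poly_vec_dim[OF v] i)
qed

lemma poly_vec_diff:
  assumes v: "poly_vec n k r v" and w: "poly_vec n k r w"
  shows "poly_vec n k r (\<lambda>y X. v y X - w y X)"
proof (rule poly_vecI)
  show "v y X - w y X \<in> carrier_vec r" for y X
    using poly_vec_carrier[OF v, of y X] poly_vec_carrier[OF w, of y X] by simp
  show "mvpoly n k (\<lambda>y X. (v y X - w y X) $ i)" if i: "i < r" for i
    by (rule mvpoly_cong[OF mvpoly_diff[OF poly_vec_entry[OF v i] poly_vec_entry[OF w i]]])
      (simp add: poly_vec_dim[OF v] poly_vec_dim[OF w] i)
qed

lemma poly_vec_mult:
  assumes F: "poly_mat n k r s F" and v: "poly_vec n k s v"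
  shows "poly_vec n k r (\<lambda>y X. F y X *\<^sub>v v y X)"
proof (rule poly_vecI)
  show "F y X *\<^sub>v v y X \<in> carrier_vec r" for y X
    using poly_mat_carrier[OF F, of y X] poly_vec_carrier[OF v, of y X] by simp
  show "mvpoly n k (\<lambda>y X. (F y X *\<^sub>v v y X) $ i)" if i: "i < r" for i
  proof (rule mvpoly_cong)
    show "mvpoly n k (\<lambda>y X. \<Sum>l<s. F y X $$ (i, l) * v y X $ l)"
      using i by (intro mvpoly_sum mvpoly.mult poly_mat_entry[OF F] poly_vec_entry[OF v]) auto
    show "(F y X *\<^sub>v v y X) $ i = (\<Sum>l<s. F y X $$ (i, l) * v y X $ l)" for y X
      using i by (simp add: poly_mat_dim[OF F] poly_vec_dim[OF v] scalar_prod_def atLeast0LessThan)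
  qed
qed

lemma poly_mat_diag:
  assumes v: "poly_vec n k m v"
  shows "poly_mat n k m m (\<lambda>y X. mat_diag m (\<lambda>i. v y X $ i))"
  unfolding mat_diag_def
  by (intro poly_mat_of_entries mvpoly_if mvpoly.const poly_vec_entry[OF v])

section \<open>Inverses and adjugates\<close>

lemma smult_smult_mat: "a \<cdot>\<^sub>m (b \<cdot>\<^sub>m A) = (a * b :: 'a :: semigroup_mult) \<cdot>\<^sub>m A"
  by (rule eq_matI) (simp_all add: mult.assoc)

lemma one_smult_mat [simp]: "(1 :: 'a :: monoid_mult) \<cdot>\<^sub>m A = A"
  by (rule eq_matI) simp_all

lemma transpose_smult_mat: "transpose_mat (a \<cdot>\<^sub>m A) = a \<cdot>\<^sub>m transpose_mat A"
  by (rule eq_matI) auto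

lemma mat_inverse_eqI:
  fixes A B :: "'a :: field mat"
  assumes A: "A \<in> carrier_mat m m" and B: "B \<in> carrier_mat m m" and AB: "A * B = 1\<^sub>m m"
  shows "mat_inverse A = Some B"
proof (cases "mat_inverse A")
  case None
  have "det A * det B = 1" using arg_cong[OF AB, of det] det_mult[OF A B] by simp
  then have "det A \<noteq> 0" by auto
  with mat_inverse(1)[OF A None, of undefined] det_non_zero_imp_unit[OF A, of undefined] show ?thesis by blast
next
  case (Some B')
  from mat_inverse(2)[OF A Some] have B'A: "B' * A = 1\<^sub>m m" and B': "B' \<in> carrier_mat m m" by auto
  have "B' = (B' * A) * B" using AB A B B' by (simp add: assoc_mult_mat)
  then show ?thesis using Some B'A B by simp
qed

lemma mat_inverse_eq_None_iff:
  fixes A :: "'a :: field mat"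
  assumes A: "A \<in> carrier_mat m m"
  shows "mat_inverse A = None \<longleftrightarrow> det A = 0"
proof
  assume "mat_inverse A = None"
  then show "det A = 0" using mat_inverse(1)[OF A, of undefined] det_non_zero_imp_unit[OF A, of undefined] by blast
next
  assume det: "det A = 0"
  show "mat_inverse A = None"
  proof (rule ccontr)
    assume "mat_inverse A \<noteq> None"
    then obtain B where "A * B = 1\<^sub>m m" "B \<in> carrier_mat m m" using mat_inverse(2)[OF A] by blast
    then have "det A * det B = 1" using det_mult[OF A] by (metis det_one)
    with det show False by simp
  qed
qed

lemma mat_inverse_adj:
  fixes A :: "'a :: field mat"
  assumes A: "A \<in> carrier_mat m m" and det: "det A \<noteq> 0"
  shows "mat_inverse A = Some ((1 / det A) \<cdot>\<^sub>m adj_mat A)"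
proof (rule mat_inverse_eqI[OF A])
  show "(1 / det A) \<cdot>\<^sub>m adj_mat A \<in> carrier_mat m m" using adj_mat(1)[OF A] by simp
  have "A * ((1 / det A) \<cdot>\<^sub>m adj_mat A) = (1 / det A) \<cdot>\<^sub>m (det A \<cdot>\<^sub>m 1\<^sub>m m)"
    using mult_smult_distrib[OF A adj_mat(1)[OF A]] adj_mat(2)[OF A] by simp
  also have "\<dots> = 1\<^sub>m m" using det by (simp add: smult_smult_mat)
  finally show "A * ((1 / det A) \<cdot>\<^sub>m adj_mat A) = 1\<^sub>m m" .
qed

lemma mat_inverse_smult:
  fixes A :: "'a :: field mat"
  assumes A: "A \<in> carrier_mat m m" and a: "a \<noteq> 0"
  shows "mat_inverse (a \<cdot>\<^sub>m A) = map_option (\<lambda>B. (1 / a) \<cdot>\<^sub>m B) (mat_inverse A)"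
proof (cases "mat_inverse A")
  case None
  have aA: "a \<cdot>\<^sub>m A \<in> carrier_mat m m" using A by simp
  have "det (a \<cdot>\<^sub>m A) = 0" using A None by (simp add: mat_inverse_eq_None_iff)
  then show ?thesis using None by (simp add: mat_inverse_eq_None_iff[OF aA])
next
  case (Some B)
  from mat_inverse(2)[OF A Some] have AB: "A * B = 1\<^sub>m m" and B: "B \<in> carrier_mat m m" by auto
  have "a \<cdot>\<^sub>m A * ((1 / a) \<cdot>\<^sub>m B) = (a * (1 / a)) \<cdot>\<^sub>m (A * B)"
    unfolding mult_smult_assoc_mat[OF A smult_carrier_mat[OF B]] mult_smult_distrib[OF A B]
      smult_smult_mat ..
  also have "\<dots> = 1\<^sub>m m" using AB a by simp
  finally have "mat_inverse (a \<cdot>\<^sub>m A) = Some ((1 / a) \<cdot>\<^sub>m B)"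
    using A B by (intro mat_inverse_eqI) simp_all
  then show ?thesis using Some by simp
qed

lemma (in vec_space) non_distinct_cols_low_rank:
  assumes A: "A \<in> carrier_mat n nc" and "\<not> distinct (cols A)"
  shows "rank A < nc"
proof -
  obtain S where S: "maximal S (\<lambda>T. T \<subseteq> set (cols A) \<and> lin_indpt T)"
    using maximal_exists[of "\<lambda>T. T \<subseteq> set (cols A) \<and> lin_indpt T" "card (set (cols A))" "{}"]
    by (meson List.finite_set card_mono empty_iff empty_subsetI finite_lin_indpt2 rev_finite_subset)
  then have "card S \<le> card (set (cols A))" by (simp add: card_mono maximal_def)
  also have "\<dots> < length (cols A)"
    using card_length[of "cols A"] card_distinct[of "cols A"] \<open>\<not> distinct (cols A)\<close> by linarith
  also have "\<dots> = nc" using A by simp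
  finally show ?thesis using rank_card_indpt[OF A S] by simp
qed

lemma (in vec_space) full_rank_mult_vec_eq_0:
  assumes A: "A \<in> carrier_mat n nc" and r: "rank A = nc"
    and v: "v \<in> carrier_vec nc" and Av: "A *\<^sub>v v = 0\<^sub>v n"
  shows "v = 0\<^sub>v nc"
proof (rule ccontr)
  assume "v \<noteq> 0\<^sub>v nc"
  moreover have dist: "distinct (cols A)" using non_distinct_cols_low_rank[OF A] r by auto
  moreover have "lin_indpt (set (cols A))" using full_rank_lin_indpt[OF A r dist] .
  ultimately show False using lin_depI[OF A v _ Av] by blast
qed

lemma det_gram_neq_0:
  fixes X :: "real mat"
  assumes X: "X \<in> carrier_mat n k" and r: "vec_space.rank n X = k"
  shows "det (transpose_mat X * X) \<noteq> 0"
proof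
  assume "det (transpose_mat X * X) = 0"
  then obtain v where v: "v \<in> carrier_vec k" "v \<noteq> 0\<^sub>v k" and XXv: "(transpose_mat X * X) *\<^sub>v v = 0\<^sub>v k"
    using det_0_iff_vec_prod_zero[of "transpose_mat X * X" k] X by auto
  define w where "w = X *\<^sub>v v"
  have w: "w \<in> carrier_vec n" using X v by (simp add: w_def)
  have "transpose_mat X *\<^sub>v w = 0\<^sub>v k"
    using XXv X v unfolding w_def by (metis assoc_mult_mat_vec carrier_matD(2) transpose_carrier_mat)
  then have "w \<bullet> w = 0"
    using transpose_vec_mult_scalar[OF X v(1) w] v unfolding w_def by simp
  then have "w = 0\<^sub>v n"
    using conjugate_square_eq_0_vec[OF w] by (simp add: conjugate_vec_def)
  then show False using vec_space.full_rank_mult_vec_eq_0[OF X r v(1)] v(2) unfolding w_def by simp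
qed

lemma smult_mat_mult_vec:
  fixes A :: "'a :: comm_semiring_0 mat"
  assumes "dim_vec v = dim_col A"
  shows "(a \<cdot>\<^sub>m A) *\<^sub>v v = a \<cdot>\<^sub>v (A *\<^sub>v v)"
  using assms by (intro eq_vecI) (simp_all add: scalar_prod_def sum_distrib_left ac_simps)

section \<open>Clearing denominators in the prewhitened estimator\<close>

definition resid_adj :: "real mat \<Rightarrow> real vec \<Rightarrow> real vec" where
  "resid_adj X y = det (transpose_mat X * X) \<cdot>\<^sub>v y
     - X *\<^sub>v (adj_mat (transpose_mat X * X) *\<^sub>v (transpose_mat X *\<^sub>v y))"

definition V_adj :: "real mat \<Rightarrow> real vec \<Rightarrow> real mat" where
  "V_adj X y = transpose_mat X * mat_diag (dim_row X) (\<lambda>i. resid_adj X y $ i)"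

lemma u_hat_eq_resid_adj:
  assumes X: "X \<in> carrier_mat n k" and y: "y \<in> carrier_vec n"
    and det: "det (transpose_mat X * X) \<noteq> 0"
  shows "u_hat X y = (1 / det (transpose_mat X * X)) \<cdot>\<^sub>v resid_adj X y"
proof -
  define G where "G = transpose_mat X * X"
  define w where "w = X *\<^sub>v (adj_mat G *\<^sub>v (transpose_mat X *\<^sub>v y))"
  have G: "G \<in> carrier_mat k k" using X by (simp add: G_def)
  have "beta_hat X y = (1 / det G) \<cdot>\<^sub>v (adj_mat G *\<^sub>v (transpose_mat X *\<^sub>v y))"
    unfolding beta_hat_def G_def[symmetric] mat_inverse_adj[OF G det[folded G_def]]
    using X y adj_mat(1)[OF G] by (simp add: smult_mat_mult_vec)
  then have "X *\<^sub>v beta_hat X y = (1 / det G) \<cdot>\<^sub>v w"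
    unfolding w_def using X y adj_mat(1)[OF G] by (simp add: mult_mat_vec[OF X])
  moreover have "w \<in> carrier_vec n" using X y adj_mat(1)[OF G] by (simp add: w_def)
  ultimately show ?thesis
    unfolding u_hat_def resid_adj_def G_def[symmetric] w_def[symmetric] using y det[folded G_def]
    by (intro eq_vecI) (simp_all add: field_simps)
qed

lemma V_hat_eq_V_adj:
  assumes X: "X \<in> carrier_mat n k" and y: "y \<in> carrier_vec n"
    and det: "det (transpose_mat X * X) \<noteq> 0"
  shows "V_hat X y = (1 / det (transpose_mat X * X)) \<cdot>\<^sub>m V_adj X y"
proof -
  have "dim_vec (resid_adj X y) = n" using X y by (simp add: resid_adj_def)
  then have "mat_diag n (\<lambda>i. u_hat X y $ i)
      = (1 / det (transpose_mat X * X)) \<cdot>\<^sub>m mat_diag n (\<lambda>i. resid_adj X y $ i)"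
    unfolding u_hat_eq_resid_adj[OF assms] by (intro eq_matI) (simp_all add: mat_diag_def)
  then show ?thesis
    unfolding V_hat_def V_adj_def using X by (simp add: mult_smult_distrib[of _ k n _ n])
qed

lemma poly_mat_V_adj:
  "poly_mat n k k n (\<lambda>y X. V_adj (mat n k (\<lambda>(i, j). X $$ (i, j))) (vec n (\<lambda>i. y $ i)))"
proof -
  have X: "poly_mat n k n k (\<lambda>y X. mat n k (\<lambda>(i, j). X $$ (i, j)))"
    by (intro poly_mat_of_entries mvpoly.xvar)
  have y: "poly_vec n k n (\<lambda>y X. vec n (\<lambda>i. y $ i))"
    by (intro poly_vec_of_entries mvpoly.yvar)
  have Xt: "poly_mat n k k n (\<lambda>y X. transpose_mat (mat n k (\<lambda>(i, j). X $$ (i, j))))"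
    by (rule poly_mat_transpose[OF X])
  have G: "poly_mat n k k k (\<lambda>y X. transpose_mat (mat n k (\<lambda>(i, j). X $$ (i, j))) * mat n k (\<lambda>(i, j). X $$ (i, j)))"
    by (rule poly_mat_mult[OF Xt X])
  have "poly_vec n k n (\<lambda>y X. resid_adj (mat n k (\<lambda>(i, j). X $$ (i, j))) (vec n (\<lambda>i. y $ i)))"
    unfolding resid_adj_def
    by (intro poly_vec_diff poly_vec_smult mvpoly_det[OF G] y
        poly_vec_mult[OF X] poly_vec_mult[OF poly_mat_adj[OF G]] poly_vec_mult[OF Xt])
  then show ?thesis
    unfolding V_adj_def using poly_mat_mult[OF Xt poly_mat_diag] by simp
qed

lemma V_p_carrier: "V \<in> carrier_mat k N \<Longrightarrow> V_p p V \<in> carrier_mat k (N - p)"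
  unfolding V_p_def by auto

lemma V_1_carrier: "V \<in> carrier_mat k N \<Longrightarrow> V_1 p V \<in> carrier_mat (k * p) (N - p)"
  unfolding V_1_def by auto

lemma V_p_smult: "V_p p (a \<cdot>\<^sub>m V) = a \<cdot>\<^sub>m V_p p V"
  unfolding V_p_def by (rule eq_matI) auto

lemma V_1_smult: "V_1 p (a \<cdot>\<^sub>m V) = a \<cdot>\<^sub>m V_1 p V"
proof (rule eq_matI)
  fix i j assume "i < dim_row (a \<cdot>\<^sub>m V_1 p V)" "j < dim_col (a \<cdot>\<^sub>m V_1 p V)"
  then have ij: "i < dim_row V * p" "j < dim_col V - p" unfolding V_1_def by auto
  then have "dim_row V > 0" by (cases "dim_row V") auto
  then show "V_1 p (a \<cdot>\<^sub>m V) $$ (i, j) = (a \<cdot>\<^sub>m V_1 p V) $$ (i, j)"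
    using ij unfolding V_1_def by simp
qed (simp_all add: V_1_def)

definition lag_gram :: "nat \<Rightarrow> real mat \<Rightarrow> real mat" where
  "lag_gram p V = V_1 p V * transpose_mat (V_1 p V)"

definition A_adj :: "nat \<Rightarrow> real mat \<Rightarrow> real mat" where
  "A_adj p V = V_p p V * transpose_mat (V_1 p V) * adj_mat (lag_gram p V)"

definition Z_adj :: "nat \<Rightarrow> real mat \<Rightarrow> real mat" where
  "Z_adj p V = det (lag_gram p V) \<cdot>\<^sub>m V_p p V - A_adj p V * V_1 p V"

lemma lag_gram_carrier: "V \<in> carrier_mat k N \<Longrightarrow> lag_gram p V \<in> carrier_mat (k * p) (k * p)"
  unfolding lag_gram_def by (metis V_1_carrier mult_carrier_mat transpose_carrier_mat)

lemma A_adj_carrier: "V \<in> carrier_mat k N \<Longrightarrow> A_adj p V \<in> carrier_mat k (k * p)"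
  unfolding A_adj_def using V_1_carrier V_p_carrier lag_gram_carrier adj_mat(1)
  by (metis mult_carrier_mat transpose_carrier_mat)

lemma Z_adj_carrier: "V \<in> carrier_mat k N \<Longrightarrow> Z_adj p V \<in> carrier_mat k (N - p)"
  unfolding Z_adj_def using V_1_carrier V_p_carrier A_adj_carrier
  by (metis minus_carrier_mat mult_carrier_mat)

lemma A_hat_eq_A_adj:
  assumes V: "V \<in> carrier_mat k N"
  shows "A_hat p V = (if det (lag_gram p V) = 0 then None
                      else Some ((1 / det (lag_gram p V)) \<cdot>\<^sub>m A_adj p V))"
proof -
  have G: "lag_gram p V \<in> carrier_mat (k * p) (k * p)" using lag_gram_carrier[OF V] .
  have VV: "V_p p V * transpose_mat (V_1 p V) \<in> carrier_mat k (k * p)"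
    using V_p_carrier[OF V] V_1_carrier[OF V] by (metis mult_carrier_mat transpose_carrier_mat)
  show ?thesis
    unfolding A_hat_def lag_gram_def[symmetric] A_adj_def
    using mat_inverse_eq_None_iff[OF G] mat_inverse_adj[OF G]
      mult_smult_distrib[OF VV adj_mat(1)[OF G]]
    by (auto split: option.split)
qed

lemma A_hat_smult:
  assumes V: "V \<in> carrier_mat k N" and a: "a \<noteq> 0"
  shows "A_hat p (a \<cdot>\<^sub>m V) = A_hat p V"
proof -
  have V1: "V_1 p V \<in> carrier_mat (k * p) (N - p)" and Vp: "V_p p V \<in> carrier_mat k (N - p)"
    using V_1_carrier[OF V] V_p_carrier[OF V] .
  have G: "lag_gram p V \<in> carrier_mat (k * p) (k * p)" using lag_gram_carrier[OF V] .
  have gram: "V_1 p (a \<cdot>\<^sub>m V) * transpose_mat (V_1 p (a \<cdot>\<^sub>m V)) = (a * a) \<cdot>\<^sub>m lag_gram p V"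
    unfolding V_1_smult transpose_smult_mat lag_gram_def
    using V1 by (simp add: mult_smult_assoc_mat[of _ "k * p" "N - p"] mult_smult_distrib[of _ "k * p" "N - p"]
        smult_smult_mat)
  have "V_p p (a \<cdot>\<^sub>m V) * transpose_mat (V_1 p (a \<cdot>\<^sub>m V)) * ((1 / (a * a)) \<cdot>\<^sub>m B)
      = V_p p V * transpose_mat (V_1 p V) * B" if B: "B \<in> carrier_mat (k * p) (k * p)" for B
  proof -
    have VV: "V_p p V * transpose_mat (V_1 p V) \<in> carrier_mat k (k * p)"
      using Vp V1 by (metis mult_carrier_mat transpose_carrier_mat)
    have "V_p p (a \<cdot>\<^sub>m V) * transpose_mat (V_1 p (a \<cdot>\<^sub>m V)) = (a * a) \<cdot>\<^sub>m (V_p p V * transpose_mat (V_1 p V))"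
      unfolding V_p_smult V_1_smult transpose_smult_mat using Vp V1
      by (simp add: mult_smult_assoc_mat[of _ k "N - p"] mult_smult_distrib[of _ k "N - p"] smult_smult_mat)
    then show ?thesis
      using a by (simp add: mult_smult_assoc_mat[OF VV smult_carrier_mat[OF B]]
          mult_smult_distrib[OF VV B] smult_smult_mat)
  qed
  moreover have "a * a \<noteq> 0" using a by simp
  moreover have "mat_inverse G' = Some B \<Longrightarrow> B \<in> carrier_mat (k * p) (k * p)"
    if "G' \<in> carrier_mat (k * p) (k * p)" for G' B
    using mat_inverse(2)[OF that] by blast
  ultimately show ?thesis
    unfolding A_hat_def gram using G by (auto simp: mat_inverse_smult lag_gram_def split: option.split)
qed

lemma A_sum_carrier: "A_sum k p A \<in> carrier_mat k k"
  unfolding A_sum_def by simp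

lemma A_sum_smult:
  assumes A: "A \<in> carrier_mat k (k * p)"
  shows "A_sum k p (a \<cdot>\<^sub>m A) = a \<cdot>\<^sub>m A_sum k p A"
  unfolding A_sum_def using A block_index_less
  by (intro eq_matI) (simp_all add: sum_distrib_left)

lemma mat_inverse_one_minus_A_sum_None_iff:
  assumes A: "A \<in> carrier_mat k (k * p)" and d: "d \<noteq> 0"
  shows "mat_inverse (1\<^sub>m k - A_sum k p ((1 / d) \<cdot>\<^sub>m A)) = None \<longleftrightarrow>
         det (d \<cdot>\<^sub>m 1\<^sub>m k - A_sum k p A) = 0"
proof -
  have C: "d \<cdot>\<^sub>m 1\<^sub>m k - A_sum k p A \<in> carrier_mat k k"
    using A_sum_carrier by (simp add: minus_carrier_mat)
  have "1\<^sub>m k - A_sum k p ((1 / d) \<cdot>\<^sub>m A) = (1 / d) \<cdot>\<^sub>m (d \<cdot>\<^sub>m 1\<^sub>m k - A_sum k p A)"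
    unfolding A_sum_smult[OF A] using d A_sum_carrier[of k p A]
    by (intro eq_matI) (auto simp: field_simps)
  then show ?thesis
    using mat_inverse_eq_None_iff[OF smult_carrier_mat[OF C]] d by simp
qed

lemma prewhitened_eq_Z_adj:
  assumes V: "V \<in> carrier_mat k N" and a: "a \<noteq> 0" and d: "det (lag_gram p V) \<noteq> 0"
  shows "V_p p (a \<cdot>\<^sub>m V) - ((1 / det (lag_gram p V)) \<cdot>\<^sub>m A_adj p V) * V_1 p (a \<cdot>\<^sub>m V)
       = (a / det (lag_gram p V)) \<cdot>\<^sub>m Z_adj p V"
proof -
  have A: "A_adj p V \<in> carrier_mat k (k * p)" using A_adj_carrier[OF V] .
  have V1: "V_1 p V \<in> carrier_mat (k * p) (N - p)" using V_1_carrier[OF V] .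
  have Vp: "V_p p V \<in> carrier_mat k (N - p)" using V_p_carrier[OF V] .
  have "((1 / det (lag_gram p V)) \<cdot>\<^sub>m A_adj p V) * V_1 p (a \<cdot>\<^sub>m V)
      = ((1 / det (lag_gram p V)) * a) \<cdot>\<^sub>m (A_adj p V * V_1 p V)"
    unfolding V_1_smult mult_smult_assoc_mat[OF A smult_carrier_mat[OF V1]]
      mult_smult_distrib[OF A V1] smult_smult_mat ..
  moreover have "A_adj p V * V_1 p V \<in> carrier_mat k (N - p)" using A V1 by simp
  ultimately show ?thesis
    unfolding V_p_smult Z_adj_def using Vp A V1 d by (intro eq_matI) (auto simp: field_simps)
qed

section \<open>Bandwidths\<close>

definition lag_cross :: "nat \<Rightarrow> real mat \<Rightarrow> nat \<Rightarrow> real" where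
  "lag_cross m Z i = (\<Sum>j\<in>{1..<m}. Z $$ (i, j) * Z $$ (i, j - 1))"

definition lag_sq :: "nat \<Rightarrow> real mat \<Rightarrow> nat \<Rightarrow> real" where
  "lag_sq m Z i = (\<Sum>j<m - 1. (Z $$ (i, j))\<^sup>2)"

lemma rho_hat_eq: "Z \<in> carrier_mat k m \<Longrightarrow> rho_hat Z i = lag_cross m Z i / lag_sq m Z i"
  unfolding rho_hat_def lag_cross_def lag_sq_def by simp

lemma lag_cross_smult:
  "Z \<in> carrier_mat k m \<Longrightarrow> i < k \<Longrightarrow> lag_cross m (a \<cdot>\<^sub>m Z) i = (a * a) * lag_cross m Z i"
  unfolding lag_cross_def sum_distrib_left by (intro sum.cong) auto

lemma lag_sq_smult:
  "Z \<in> carrier_mat k m \<Longrightarrow> i < k \<Longrightarrow> lag_sq m (a \<cdot>\<^sub>m Z) i = (a * a) * lag_sq m Z i"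
  unfolding lag_sq_def sum_distrib_left by (intro sum.cong) (auto simp: power2_eq_square)

lemma rho_hat_smult:
  assumes Z: "Z \<in> carrier_mat k m" and i: "i < k" and a: "a \<noteq> 0"
  shows "rho_hat (a \<cdot>\<^sub>m Z) i = rho_hat Z i"
  using a by (simp add: rho_hat_eq[OF Z] rho_hat_eq[OF smult_carrier_mat[OF Z]]
      lag_cross_smult[OF Z i] lag_sq_smult[OF Z i])

lemma sigma2_hat_smult:
  assumes Z: "Z \<in> carrier_mat k m" and i: "i < k" and a: "a \<noteq> 0"
  shows "sigma2_hat (a \<cdot>\<^sub>m Z) i = (a * a) * sigma2_hat Z i"
proof -
  have "(\<Sum>j\<in>{1..<m}. ((a \<cdot>\<^sub>m Z) $$ (i, j) - rho_hat Z i * (a \<cdot>\<^sub>m Z) $$ (i, j - 1))\<^sup>2)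
     = (a * a) * (\<Sum>j\<in>{1..<m}. (Z $$ (i, j) - rho_hat Z i * Z $$ (i, j - 1))\<^sup>2)"
    unfolding sum_distrib_left using Z i by (intro sum.cong) (auto simp: power2_eq_square algebra_simps)
  then show ?thesis
    unfolding sigma2_hat_def rho_hat_smult[OF assms] using Z by simp
qed

definition AM_regular :: "nat \<Rightarrow> real mat \<Rightarrow> bool" where
  "AM_regular j Z \<longleftrightarrow> (\<forall>i<dim_row Z. (\<Sum>l<dim_col Z - 1. (Z $$ (i, l))\<^sup>2) \<noteq> 0
     \<and> rho_hat Z i \<noteq> 1 \<and> (j = 1 \<longrightarrow> rho_hat Z i \<noteq> -1))"

definition AM_denom :: "real vec \<Rightarrow> real mat \<Rightarrow> real" where
  "AM_denom \<omega> Z = (\<Sum>i<dim_row Z. \<omega> $ i * (sigma2_hat Z i)\<^sup>2 / (1 - rho_hat Z i) ^ 4)"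

definition NW_denom :: "real vec \<Rightarrow> (int \<Rightarrow> real) \<Rightarrow> real mat \<Rightarrow> real" where
  "NW_denom \<omega> w Z = (\<Sum>i\<in>{-(int (dim_col Z) - 1)..int (dim_col Z) - 1}.
     w i * (\<omega> \<bullet> (Gam Z (nat \<bar>i\<bar>) *\<^sub>v \<omega>)))"

lemma bandwidth_val_AM_None_iff:
  "bandwidth_val (AM c1 c2 j \<omega>) N Z = None \<longleftrightarrow> \<not> (AM_regular j Z \<and> AM_denom \<omega> Z \<noteq> 0)"
  unfolding bandwidth_val_def AM_regular_def AM_denom_def Let_def by auto

lemma bandwidth_val_NW_None_iff:
  "bandwidth_val (NW \<omega> w c1 c2 c3) N Z = None \<longleftrightarrow> NW_denom \<omega> w Z = 0"
  unfolding bandwidth_val_def NW_denom_def Let_def by auto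

lemma AM_regular_smult:
  assumes Z: "Z \<in> carrier_mat k m" and a: "a \<noteq> 0"
  shows "AM_regular j (a \<cdot>\<^sub>m Z) \<longleftrightarrow> AM_regular j Z"
  using Z a lag_sq_smult[OF Z] rho_hat_smult[OF Z]
  by (simp add: AM_regular_def lag_sq_def)

lemma AM_denom_smult:
  assumes Z: "Z \<in> carrier_mat k m" and a: "a \<noteq> 0"
  shows "AM_denom \<omega> (a \<cdot>\<^sub>m Z) = (a * a) ^ 2 * AM_denom \<omega> Z"
  unfolding AM_denom_def sum_distrib_left using Z
  by (intro sum.cong) (auto simp: rho_hat_smult[OF Z _ a] sigma2_hat_smult[OF Z _ a] power_mult_distrib)

lemma Gam_smult: "Gam (a \<cdot>\<^sub>m Z) s = (a * a) \<cdot>\<^sub>m Gam Z s"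
  unfolding Gam_def by (intro eq_matI) (auto simp: sum_distrib_left ac_simps intro!: sum.cong)

lemma NW_denom_smult:
  assumes \<omega>: "\<omega> \<in> carrier_vec (dim_row Z)"
  shows "NW_denom \<omega> w (a \<cdot>\<^sub>m Z) = (a * a) * NW_denom \<omega> w Z"
proof -
  have "\<omega> \<bullet> (Gam (a \<cdot>\<^sub>m Z) s *\<^sub>v \<omega>) = (a * a) * (\<omega> \<bullet> (Gam Z s *\<^sub>v \<omega>))" for s
    unfolding Gam_smult using \<omega>
    by (simp add: Gam_def smult_mat_mult_vec scalar_prod_smult_distrib[of _ "dim_row Z"])
  then show ?thesis unfolding NW_denom_def sum_distrib_left by (simp add: ac_simps)
qed

lemma bandwidth_val_smult_None_iff:
  assumes Z: "Z \<in> carrier_mat k m" and a: "a \<noteq> 0" and ok: "bandwidth_ok N k p b"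
  shows "bandwidth_val b N (a \<cdot>\<^sub>m Z) = None \<longleftrightarrow> bandwidth_val b N Z = None"
proof (cases b)
  case (AM c1 c2 j \<omega>)
  show ?thesis
    unfolding AM bandwidth_val_AM_None_iff AM_regular_smult[OF Z a] AM_denom_smult[OF Z a]
    using a by simp
next
  case (NW \<omega> w c1 c2 c3)
  then have "\<omega> \<in> carrier_vec (dim_row Z)"
    using ok Z unfolding bandwidth_ok_def weights_vector_def by auto
  then show ?thesis unfolding NW bandwidth_val_NW_None_iff using NW_denom_smult a by simp
next
  case (KV M)
  then show ?thesis unfolding bandwidth_val_def by simp
qed

definition ar_resid_sq :: "nat \<Rightarrow> real mat \<Rightarrow> nat \<Rightarrow> real" where
  "ar_resid_sq m Z i =
     (\<Sum>j\<in>{1..<m}. (lag_sq m Z i * Z $$ (i, j) - lag_cross m Z i * Z $$ (i, j - 1))\<^sup>2)"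

definition AM_regular_poly :: "nat \<Rightarrow> nat \<Rightarrow> nat \<Rightarrow> real mat \<Rightarrow> real" where
  "AM_regular_poly k m j Z = (\<Prod>i<k. lag_sq m Z i * (lag_sq m Z i - lag_cross m Z i)
     * (if j = 1 then lag_sq m Z i + lag_cross m Z i else 1))"

text \<open>\<open>AM_denom\<close> with its denominators cleared, using \<open>1 - rho_hat Z i = (lag_sq - lag_cross) / lag_sq\<close>
  and \<open>sigma2_hat_eq\<close> below.\<close>

definition AM_denom_poly :: "nat \<Rightarrow> nat \<Rightarrow> real vec \<Rightarrow> real mat \<Rightarrow> real" where
  "AM_denom_poly k m \<omega> Z = (\<Sum>i<k. \<omega> $ i * (ar_resid_sq m Z i)\<^sup>2
     * (\<Prod>l\<in>{..<k} - {i}. (lag_sq m Z l - lag_cross m Z l) ^ 4))"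

definition NW_denom_poly :: "nat \<Rightarrow> nat \<Rightarrow> real vec \<Rightarrow> (int \<Rightarrow> real) \<Rightarrow> real mat \<Rightarrow> real" where
  "NW_denom_poly k m \<omega> w Z = (\<Sum>i\<in>{-(int m - 1)..int m - 1}. w i * (\<Sum>a<k. \<omega> $ a * (\<Sum>b<k.
     ((\<Sum>j\<in>{nat \<bar>i\<bar>..<m}. Z $$ (a, j) * Z $$ (b, j - nat \<bar>i\<bar>)) / real m) * \<omega> $ b)))"

definition bandwidth_poly :: "bandwidth \<Rightarrow> nat \<Rightarrow> nat \<Rightarrow> real mat \<Rightarrow> real" where
  "bandwidth_poly b k m Z = (case b of
      AM c1 c2 j \<omega> \<Rightarrow> AM_regular_poly k m j Z * AM_denom_poly k m \<omega> Z
    | NW \<omega> w c1 c2 c3 \<Rightarrow> NW_denom_poly k m \<omega> w Z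
    | KV M \<Rightarrow> 1)"

lemma mvpoly_bandwidth_poly:
  assumes F: "poly_mat n k k m F"
  shows "mvpoly n k (\<lambda>y X. bandwidth_poly b k m (F y X))"
proof (cases b)
  case (AM c1 c2 j \<omega>)
  have cross: "mvpoly n k (\<lambda>y X. lag_cross m (F y X) i)" if "i < k" for i
    unfolding lag_cross_def using that
    by (intro mvpoly_sum mvpoly.mult poly_mat_entry[OF F]) auto
  have sq: "mvpoly n k (\<lambda>y X. lag_sq m (F y X) i)" if "i < k" for i
    unfolding lag_sq_def using that
    by (intro mvpoly_sum mvpoly_power poly_mat_entry[OF F]) auto
  have resid: "mvpoly n k (\<lambda>y X. ar_resid_sq m (F y X) i)" if "i < k" for i
    unfolding ar_resid_sq_def using that
    by (intro mvpoly_sum mvpoly_power mvpoly_diff mvpoly.mult cross sq poly_mat_entry[OF F]) auto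
  have "mvpoly n k (\<lambda>y X. AM_regular_poly k m j (F y X))"
    unfolding AM_regular_poly_def
    by (intro mvpoly_prod mvpoly.mult mvpoly_if mvpoly.add mvpoly_diff mvpoly.const cross sq) simp_all
  moreover have "mvpoly n k (\<lambda>y X. AM_denom_poly k m \<omega> (F y X))"
    unfolding AM_denom_poly_def
    by (intro mvpoly_sum mvpoly_prod mvpoly.mult mvpoly_power mvpoly_diff mvpoly.const resid cross sq)
      auto
  ultimately show ?thesis unfolding AM bandwidth_poly_def by (simp add: mvpoly.mult)
next
  case (NW \<omega> w c1 c2 c3)
  have "mvpoly n k (\<lambda>y X. NW_denom_poly k m \<omega> w (F y X))"
    unfolding NW_denom_poly_def
    by (intro mvpoly_sum mvpoly.mult mvpoly.const mvpoly_divide_const poly_mat_entry[OF F]) auto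
  then show ?thesis unfolding NW bandwidth_poly_def by simp
next
  case (KV M)
  then show ?thesis unfolding bandwidth_poly_def by (simp add: mvpoly.const)
qed

lemma NW_denom_eq_poly:
  assumes Z: "Z \<in> carrier_mat k m" and \<omega>: "\<omega> \<in> carrier_vec k"
  shows "NW_denom \<omega> w Z = NW_denom_poly k m \<omega> w Z"
proof -
  have "\<omega> \<bullet> (Gam Z s *\<^sub>v \<omega>) = (\<Sum>a<k. \<omega> $ a * (\<Sum>b<k.
      ((\<Sum>j\<in>{s..<m}. Z $$ (a, j) * Z $$ (b, j - s)) / real m) * \<omega> $ b))" for s
    using Z \<omega> by (auto simp: scalar_prod_def Gam_def atLeast0LessThan intro!: sum.cong)
  then show ?thesis unfolding NW_denom_def NW_denom_poly_def using Z by simp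
qed

lemma AM_regular_iff_poly:
  assumes Z: "Z \<in> carrier_mat k m"
  shows "AM_regular j Z \<longleftrightarrow> AM_regular_poly k m j Z \<noteq> 0"
proof -
  have "(lag_cross m Z i / lag_sq m Z i \<noteq> 1 \<longleftrightarrow> lag_sq m Z i - lag_cross m Z i \<noteq> 0)
      \<and> (lag_cross m Z i / lag_sq m Z i \<noteq> -1 \<longleftrightarrow> lag_sq m Z i + lag_cross m Z i \<noteq> 0)"
    if "lag_sq m Z i \<noteq> 0" for i
    using that by (auto simp: field_simps)
  then show ?thesis
    unfolding AM_regular_def AM_regular_poly_def rho_hat_eq[OF Z]
    using Z by (auto simp: lag_sq_def prod_zero_iff)
qed

lemma sigma2_hat_eq:
  assumes Z: "Z \<in> carrier_mat k m" and sq: "lag_sq m Z i \<noteq> 0"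
  shows "sigma2_hat Z i = ar_resid_sq m Z i / ((lag_sq m Z i)\<^sup>2 * real (m - 1))"
proof -
  have "(\<Sum>j\<in>{1..<m}. (Z $$ (i, j) - lag_cross m Z i / lag_sq m Z i * Z $$ (i, j - 1))\<^sup>2)
      = ar_resid_sq m Z i / (lag_sq m Z i)\<^sup>2"
    unfolding ar_resid_sq_def sum_divide_distrib using sq
    by (intro sum.cong) (auto simp: field_simps power2_eq_square)
  then show ?thesis unfolding sigma2_hat_def rho_hat_eq[OF Z] using Z by simp
qed

lemma divide_eq_prod_remove:
  fixes q :: "nat \<Rightarrow> real"
  assumes i: "i < k" and q: "\<forall>l<k. q l \<noteq> 0"
  shows "x / q i = x * (\<Prod>l\<in>{..<k} - {i}. q l) / (\<Prod>l<k. q l)"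
proof -
  have "(\<Prod>l<k. q l) = q i * (\<Prod>l\<in>{..<k} - {i}. q l)"
    using i by (simp add: prod.remove)
  moreover have "(\<Prod>l\<in>{..<k} - {i}. q l) \<noteq> 0" using q by (auto simp: prod_zero_iff)
  ultimately show ?thesis using q i by (simp add: field_simps)
qed

lemma AM_denom_eq_poly:
  assumes Z: "Z \<in> carrier_mat k m" and m: "m \<ge> 2" and reg: "AM_regular j Z"
  shows "AM_denom \<omega> Z = AM_denom_poly k m \<omega> Z
           / ((\<Prod>l<k. (lag_sq m Z l - lag_cross m Z l) ^ 4) * (real (m - 1))\<^sup>2)"
proof -
  define q where "q l = (lag_sq m Z l - lag_cross m Z l) ^ 4" for l
  have sq: "lag_sq m Z i \<noteq> 0" and gap: "lag_sq m Z i - lag_cross m Z i \<noteq> 0" if "i < k" for i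
    using reg that Z AM_regular_iff_poly[OF Z, of j] by (auto simp: AM_regular_poly_def prod_zero_iff)
  have q: "\<forall>l<k. q l \<noteq> 0" using gap by (simp add: q_def)
  have m1: "real (m - 1) \<noteq> 0" using m by simp
  have "\<omega> $ i * (sigma2_hat Z i)\<^sup>2 / (1 - rho_hat Z i) ^ 4
      = \<omega> $ i * (ar_resid_sq m Z i)\<^sup>2 / q i / (real (m - 1))\<^sup>2" if i: "i < k" for i
  proof -
    have "1 - rho_hat Z i = (lag_sq m Z i - lag_cross m Z i) / lag_sq m Z i"
      unfolding rho_hat_eq[OF Z] using sq[OF i] by (simp add: field_simps)
    then show ?thesis
      unfolding sigma2_hat_eq[OF Z sq[OF i]] q_def using sq[OF i] gap[OF i] m1
      by (simp add: field_simps power2_eq_square eval_nat_numeral)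
  qed
  then have "AM_denom \<omega> Z = (\<Sum>i<k. \<omega> $ i * (ar_resid_sq m Z i)\<^sup>2 / q i) / (real (m - 1))\<^sup>2"
    unfolding AM_denom_def sum_divide_distrib using Z by (auto intro!: sum.cong)
  also have "(\<Sum>i<k. \<omega> $ i * (ar_resid_sq m Z i)\<^sup>2 / q i) = AM_denom_poly k m \<omega> Z / (\<Prod>l<k. q l)"
    unfolding AM_denom_poly_def sum_divide_distrib q_def[symmetric]
    using divide_eq_prod_remove[OF _ q] by (intro sum.cong) simp_all
  finally show ?thesis by (simp add: q_def)
qed

lemma bandwidth_val_None_iff_poly:
  assumes Z: "Z \<in> carrier_mat k m" and m: "m \<ge> 2" and ok: "bandwidth_ok N k p b"
  shows "bandwidth_val b N Z = None \<longleftrightarrow> bandwidth_poly b k m Z = 0"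
proof (cases b)
  case (AM c1 c2 j \<omega>)
  have "(\<Prod>l<k. (lag_sq m Z l - lag_cross m Z l) ^ 4) \<noteq> 0" if "AM_regular j Z"
    using that AM_regular_iff_poly[OF Z, of j] by (auto simp: AM_regular_poly_def prod_zero_iff)
  then show ?thesis
    unfolding AM bandwidth_val_AM_None_iff bandwidth_poly_def
    using AM_regular_iff_poly[OF Z, of j] AM_denom_eq_poly[OF Z m] m by auto
next
  case (NW \<omega> w c1 c2 c3)
  then have "\<omega> \<in> carrier_vec k" using ok unfolding bandwidth_ok_def weights_vector_def by auto
  then show ?thesis
    unfolding NW bandwidth_val_NW_None_iff bandwidth_poly_def using NW_denom_eq_poly[OF Z] by simp
next
  case (KV M)
  then show ?thesis unfolding bandwidth_val_def bandwidth_poly_def by simp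
qed

section \<open>The set where the estimator is undefined\<close>

lemma Omega_hat_None_iff:
  "Omega_hat \<kappa> b p X R y = None \<longleftrightarrow>
   A_hat p (V_hat X y) = None \<or> (\<exists>A. A_hat p (V_hat X y) = Some A \<and>
     (mat_inverse (1\<^sub>m (dim_col X) - A_sum (dim_col X) p A) = None \<or>
      bandwidth_val b (dim_row X) (V_p p (V_hat X y) - A * V_1 p (V_hat X y)) = None))"
  unfolding Omega_hat_def Let_def by (auto split: option.split)

text \<open>Reading the entries of \<open>X\<close> and \<open>y\<close> through \<open>mat n k\<close> and \<open>vec n\<close> makes the witness a
  polynomial on all of \<open>real vec \<times> real mat\<close>, not only on correctly sized arguments.\<close>

definition N_poly :: "nat \<Rightarrow> nat \<Rightarrow> nat \<Rightarrow> bandwidth \<Rightarrow> real vec \<Rightarrow> real mat \<Rightarrow> real" where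
  "N_poly n k p b y X =
    (let V = V_adj (mat n k (\<lambda>(i, j). X $$ (i, j))) (vec n (\<lambda>i. y $ i)); d = det (lag_gram p V)
     in d * det (d \<cdot>\<^sub>m 1\<^sub>m k - A_sum k p (A_adj p V)) * bandwidth_poly b k (n - p) (Z_adj p V))"

lemma mvpoly_N_poly: "mvpoly n k (N_poly n k p b)"
proof -
  define V where "V y X = V_adj (mat n k (\<lambda>(i, j). X $$ (i, j))) (vec n (\<lambda>i. y $ i))" for y X
  have V: "poly_mat n k k n V" unfolding V_def by (rule poly_mat_V_adj)
  have V1: "poly_mat n k (k * p) (n - p) (\<lambda>y X. V_1 p (V y X))" by (rule poly_mat_V_1[OF V])
  have Vp: "poly_mat n k k (n - p) (\<lambda>y X. V_p p (V y X))" by (rule poly_mat_V_p[OF V])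
  have G: "poly_mat n k (k * p) (k * p) (\<lambda>y X. lag_gram p (V y X))"
    unfolding lag_gram_def by (rule poly_mat_mult[OF V1 poly_mat_transpose[OF V1]])
  have A: "poly_mat n k k (k * p) (\<lambda>y X. A_adj p (V y X))"
    unfolding A_adj_def by (rule poly_mat_mult[OF poly_mat_mult[OF Vp poly_mat_transpose[OF V1]] poly_mat_adj[OF G]])
  have Z: "poly_mat n k k (n - p) (\<lambda>y X. Z_adj p (V y X))"
    unfolding Z_adj_def by (rule poly_mat_diff[OF poly_mat_smult[OF mvpoly_det[OF G] Vp] poly_mat_mult[OF A V1]])
  have "mvpoly n k (\<lambda>y X. det (lag_gram p (V y X))
      * det (det (lag_gram p (V y X)) \<cdot>\<^sub>m 1\<^sub>m k - A_sum k p (A_adj p (V y X)))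
      * bandwidth_poly b k (n - p) (Z_adj p (V y X)))"
    by (intro mvpoly.mult mvpoly_det[OF G] mvpoly_bandwidth_poly[OF Z]
        mvpoly_det[OF poly_mat_diff[OF poly_mat_smult[OF mvpoly_det[OF G] poly_mat_one] poly_mat_A_sum[OF A]]])
  then show ?thesis unfolding N_poly_def V_def Let_def by simp
qed

lemma Omega_hat_None_iff_N_poly:
  assumes X: "X \<in> carrier_mat n k" and rk: "vec_space.rank n X = k" and y: "y \<in> carrier_vec n"
    and m: "n - p \<ge> 2" and ok: "bandwidth_ok n k p b"
  shows "Omega_hat \<kappa> b p X R y = None \<longleftrightarrow> N_poly n k p b y X = 0"
proof -
  define c where "c = det (transpose_mat X * X)"
  define V where "V = V_adj X y"
  define d where "d = det (lag_gram p V)"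
  have c: "c \<noteq> 0" unfolding c_def using det_gram_neq_0[OF X rk] .
  have V: "V \<in> carrier_mat k n" using X by (simp add: V_def V_adj_def)
  have N: "N_poly n k p b y X = d * det (d \<cdot>\<^sub>m 1\<^sub>m k - A_sum k p (A_adj p V)) * bandwidth_poly b k (n - p) (Z_adj p V)"
  proof -
    have "mat n k (\<lambda>(i, j). X $$ (i, j)) = X" and "vec n (\<lambda>i. y $ i) = y"
      using X y by (auto intro: eq_matI eq_vecI)
    then show ?thesis unfolding N_poly_def V_def d_def Let_def by simp
  qed
  have Vh: "V_hat X y = (1 / c) \<cdot>\<^sub>m V" unfolding V_def c_def by (rule V_hat_eq_V_adj[OF X y c[unfolded c_def]])
  have Ah: "A_hat p (V_hat X y) = (if d = 0 then None else Some ((1 / d) \<cdot>\<^sub>m A_adj p V))"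
    unfolding Vh d_def using c by (simp add: A_hat_smult[OF V] A_hat_eq_A_adj[OF V])
  show ?thesis
  proof (cases "d = 0")
    case True
    then show ?thesis unfolding Omega_hat_None_iff Ah N by simp
  next
    case False
    have inv: "mat_inverse (1\<^sub>m k - A_sum k p ((1 / d) \<cdot>\<^sub>m A_adj p V)) = None
        \<longleftrightarrow> det (d \<cdot>\<^sub>m 1\<^sub>m k - A_sum k p (A_adj p V)) = 0"
      by (rule mat_inverse_one_minus_A_sum_None_iff[OF A_adj_carrier[OF V] False])
    have "V_p p (V_hat X y) - ((1 / d) \<cdot>\<^sub>m A_adj p V) * V_1 p (V_hat X y) = (1 / c / d) \<cdot>\<^sub>m Z_adj p V"
      unfolding Vh d_def using prewhitened_eq_Z_adj[OF V _ False[unfolded d_def]] c by simp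
    moreover have "bandwidth_val b n ((1 / c / d) \<cdot>\<^sub>m Z_adj p V) = None
        \<longleftrightarrow> bandwidth_poly b k (n - p) (Z_adj p V) = 0"
      using bandwidth_val_smult_None_iff[OF Z_adj_carrier[OF V] _ ok]
        bandwidth_val_None_iff_poly[OF Z_adj_carrier[OF V] m ok] c False by simp
    ultimately show ?thesis
      unfolding Omega_hat_None_iff Ah N using X inv False by simp
  qed
qed

lemma assumption_A_two_le_effective_sample:
  assumes "assumption_A n k \<kappa> b p" and "1 \<le> k" and "2 < n"
  shows "2 \<le> n - p"
proof -
  have p: "1 \<le> p" and "real p * real (k + 1) \<le> real n"
    using assms(1) assms(2) by (auto simp: assumption_A_def field_simps)
  moreover have "real p * 2 \<le> real p * real (k + 1)" using assms(2) by (intro mult_left_mono) auto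
  ultimately have "2 * p \<le> n" by linarith
  then show ?thesis using p assms(3) by linarith
qed

theorem lemma3p1:
  fixes n k p :: nat and \<kappa> :: "real \<Rightarrow> real" and b :: bandwidth
  assumes "n > 2" and "1 \<le> k" and "k < n"
    and "assumption_A n k \<kappa> b p"
  shows "\<exists>g. mvpoly n k g \<and>
           (\<forall>X \<in> design_set n k. \<forall>q::nat. \<forall>R \<in> carrier_mat q k. \<forall>r :: real vec \<in> carrier_vec q.
              q \<ge> 1 \<longrightarrow> vec_space.rank q R = q \<longrightarrow>
              N_set \<kappa> b p X R = {y \<in> carrier_vec n. g y X = 0})"
proof (intro exI conjI ballI allI impI)
  show "mvpoly n k (N_poly n k p b)" by (rule mvpoly_N_poly)
  have m: "2 \<le> n - p" using assumption_A_two_le_effective_sample assms by blast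
  have ok: "bandwidth_ok n k p b" using assms(4) by (simp add: assumption_A_def)
  fix X R assume "X \<in> design_set n k"
  then have X: "X \<in> carrier_mat n k" and rk: "vec_space.rank n X = k" by (auto simp: design_set_def)
  show "N_set \<kappa> b p X R = {y \<in> carrier_vec n. N_poly n k p b y X = 0}"
    unfolding N_set_def using Omega_hat_None_iff_N_poly[OF X rk _ m ok] X by auto
qed

end
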